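(* Let $C:\{0,1\}^n\to\{0,1\}^m$ be a $(q,\delta,\varepsilon)$ insdel LDC with a non-adaptive decoder $\mathrm{Dec}$ that always queries exactly $q$ positions. Let $\mathcal D$ be any probability distribution over subsets $D\subseteq[2m]$ such that every $D$ in its support satisfies $|D\cap[m]|\le\delta m$ and $|D|\le m$. Then for every $i\in[n]$, if $Q$ is the random query set of $\mathrm{Dec}(\cdot,m,i)$ and $D\sim\mathcal D$ is independent of it, $\Pr[Q^D\in\mathrm{Good}_i]\ge 3\varepsilon/2$.
   Context: $\mathrm{ED}(u,v)$ is the minimum number of insertions and deletions transforming $u$ into $v$. $C$ is a $(q,\delta,\varepsilon)$ insdel LDC ($\varepsilon\in(0,1/2]$) if a randomized $\mathrm{Dec}$ given oracle access to $y\in\{0,1\}^{m'}$, $m'$ and $i\in[n]$ reads at most $q$ symbols and satisfies $\Pr[\mathrm{Dec}(y,m',i)=x_i]\ge1/2+\varepsilon$ whenever $\mathrm{ED}(C(x),y)\le2\delta m$; non-adaptive means its query distribution does not depend on $y$. For $x\in\{0,1\}^n$, $C'(x)\in\{0,1\}^{2m}$ is $C(x)$ followed by $m$ independent uniform random bits. $\mathrm{Good}_i$ is the set of $Q\in\binom{[2m]}{q}$ such that some $f:\{0,1\}^q\to\{0,1\}$ has $\Pr[f(C'(x)_Q)=x_i]\ge1/2+\varepsilon/4$ over uniform $x$ and padded bits. For $D\subseteq[2m]$, $\phi_D:[2m-|D|]\to[2m]$ is $\phi_D(j)=\min\{j'\in[2m]:|[j']\setminus D|\ge j\}$ (the original position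 of the $j$-th surviving symbol after deleting positions in $D$), and for $Q=\{k_0<\dots<k_{q-1}\}\subseteq[m]$ with $|D|\le m$, $Q^D=\{\phi_D(k_0),\dots,\phi_D(k_{q-1})\}$. *)

theory Defs
  imports "HOL-Probability.Probability"
begin

text \<open>Conventions: binary strings are bool lists; positions are 1-indexed,
  so position j of y is y ! (j - 1), and [k] = {1..k}.\<close>

definition bitstrings :: "nat \<Rightarrow> bool list set" where
  "bitstrings k = {xs. length xs = k}"

definition insdel_step :: "bool list \<Rightarrow> bool list \<Rightarrow> bool" where
  "insdel_step u v \<longleftrightarrow> (\<exists>a b c. (u = a @ [c] @ b \<and> v = a @ b) \<or> (u = a @ b \<and> v = a @ [c] @ b))"

definition ED :: "bool list \<Rightarrow> bool list \<Rightarrow> nat" where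
  "ED u v = (LEAST k. (insdel_step ^^ k) u v)"

definition restr :: "bool list \<Rightarrow> nat set \<Rightarrow> bool list" where
  "restr y Q = map (\<lambda>j. y ! (j - 1)) (sorted_list_of_set Q)"

text \<open>A non-adaptive randomized decoder: Dec m' i is a distribution over pairs
  (query set Q, decision function f); on oracle y it outputs f (y_Q).
  Since the distribution of Q does not depend on y, it is non-adaptive.\<close>
type_synonym decoder = "nat \<Rightarrow> nat \<Rightarrow> (nat set \<times> (bool list \<Rightarrow> bool)) pmf"

definition dec_out :: "decoder \<Rightarrow> bool list \<Rightarrow> nat \<Rightarrow> nat \<Rightarrow> bool pmf" where
  "dec_out Dec y m' i = map_pmf (\<lambda>(Q, f). f (restr y Q)) (Dec m' i)"

definition nonadaptive_insdel_LDC ::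
  "nat \<Rightarrow> nat \<Rightarrow> (bool list \<Rightarrow> bool list) \<Rightarrow> nat \<Rightarrow> real \<Rightarrow> real \<Rightarrow> decoder \<Rightarrow> bool" where
  "nonadaptive_insdel_LDC n m C q \<delta> \<epsilon> Dec \<longleftrightarrow>
     0 < \<epsilon> \<and> \<epsilon> \<le> 1/2 \<and>
     (\<forall>x \<in> bitstrings n. C x \<in> bitstrings m) \<and>
     (\<forall>m' i. i \<in> {1..n} \<longrightarrow> (\<forall>(Q, f) \<in> set_pmf (Dec m' i). Q \<subseteq> {1..m'} \<and> card Q \<le> q)) \<and>
     (\<forall>x \<in> bitstrings n. \<forall>y. real (ED (C x) y) \<le> 2 * \<delta> * real m \<longrightarrow>
        (\<forall>i \<in> {1..n}. measure_pmf.prob (dec_out Dec y (length y) i) {x ! (i - 1)} \<ge> 1/2 + \<epsilon>))"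

definition Good :: "nat \<Rightarrow> nat \<Rightarrow> (bool list \<Rightarrow> bool list) \<Rightarrow> nat \<Rightarrow> real \<Rightarrow> nat \<Rightarrow> nat set set" where
  "Good n m C q \<epsilon> i = {Q. Q \<subseteq> {1..2*m} \<and> card Q = q \<and>
     (\<exists>f :: bool list \<Rightarrow> bool.
        measure_pmf.prob (pair_pmf (pmf_of_set (bitstrings n)) (pmf_of_set (bitstrings m)))
          {(x, r). f (restr (C x @ r) Q) = x ! (i - 1)} \<ge> 1/2 + \<epsilon>/4)}"

definition phi :: "nat \<Rightarrow> nat set \<Rightarrow> nat \<Rightarrow> nat" where
  "phi m D j = (LEAST j'. j' \<in> {1..2*m} \<and> j \<le> card ({1..j'} - D))"

definition shiftQ :: "nat \<Rightarrow> nat set \<Rightarrow> nat set \<Rightarrow> nat set" where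
  "shiftQ m D Q = phi m D ` Q"

end

theory Submission
  imports Defs
begin

text \<open>Deleting the positions of D from C'(x) and keeping the first m surviving symbols gives a
  string y at edit distance at most 2|D \<inter> [m]| \<le> 2\<delta>m from C(x), so the decoder recovers x_i from y
  with probability 1/2 + \<epsilon>; and reading y at Q is reading C'(x) at Q^D. Averaged over x, the
  padding, Q and D, the success probability is thus at least 1/2 + \<epsilon>, while it is below
  1/2 + \<epsilon>/4 whenever Q^D is not good. Hence Pr[Q^D good] \<ge> 3\<epsilon>/4 / (1/2 - \<epsilon>/4) \<ge> 3\<epsilon>/2.\<close>

lemma prob_pair_pmf_eq_expectation:
  "measure_pmf.prob (pair_pmf A B) S =
     measure_pmf.expectation A (\<lambda>a. measure_pmf.prob B {b. (a, b) \<in> S})"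
proof -
  have "emeasure (pair_pmf A B) S = (\<integral>\<^sup>+a. emeasure B {b. (a, b) \<in> S} \<partial>A)"
    unfolding pair_pmf_def
    by (simp add: nn_integral_indicator[symmetric] indicator_def cong: nn_integral_cong)
  also have "\<dots> = ennreal (measure_pmf.expectation A (\<lambda>a. measure_pmf.prob B {b. (a, b) \<in> S}))"
    by (simp add: measure_pmf.emeasure_eq_measure)
       (intro nn_integral_eq_integral measure_pmf.integrable_const_bound[where B=1]; simp)
  finally show ?thesis
    by (simp add: measure_pmf.emeasure_eq_measure)
qed

lemma prob_pair_pmf_ge_if_sections_ge:
  assumes "\<And>b. b \<in> set_pmf B \<Longrightarrow> p \<le> measure_pmf.prob A {a. (a, b) \<in> S}"
  shows "p \<le> measure_pmf.prob (pair_pmf A B) S"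
proof -
  have "measure_pmf.prob (pair_pmf A B) S = measure_pmf.prob (pair_pmf B A) {(b, a). (a, b) \<in> S}"
    by (subst pair_commute_pmf) (simp add: case_prod_unfold vimage_def)
  also have "\<dots> = measure_pmf.expectation B (\<lambda>b. measure_pmf.prob A {a. (a, b) \<in> S})"
    by (simp add: prob_pair_pmf_eq_expectation)
  also have "p \<le> \<dots>"
    by (intro measure_pmf.integral_ge_const AE_pmfI assms
          measure_pmf.integrable_const_bound[where B=1]) auto
  finally show ?thesis .
qed

lemma prob_pair_pmf_le_if_sections_le:
  assumes "\<And>a. a \<in> set_pmf A \<Longrightarrow> a \<notin> G \<Longrightarrow> measure_pmf.prob B {b. (a, b) \<in> S} \<le> c"
    and "c \<le> 1"
  shows "measure_pmf.prob (pair_pmf A B) S \<le> c + (1 - c) * measure_pmf.prob A G"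
proof -
  have indicator_integrable: "integrable A (\<lambda>a. (1 - c) * indicator G a)"
    by (intro measure_pmf.integrable_const_bound[where B="\<bar>1 - c\<bar>"])
       (auto simp: indicator_def)
  have "measure_pmf.prob (pair_pmf A B) S =
          measure_pmf.expectation A (\<lambda>a. measure_pmf.prob B {b. (a, b) \<in> S})"
    by (rule prob_pair_pmf_eq_expectation)
  also have "\<dots> \<le> measure_pmf.expectation A (\<lambda>a. c + (1 - c) * indicator G a)"
  proof (rule integral_mono_AE)
    show "integrable A (\<lambda>a. measure_pmf.prob B {b. (a, b) \<in> S})"
      by (intro measure_pmf.integrable_const_bound[where B=1]) auto
    show "integrable A (\<lambda>a. c + (1 - c) * indicator G a)"
      using indicator_integrable by simp
    show "AE a in A. measure_pmf.prob B {b. (a, b) \<in> S} \<le> c + (1 - c) * indicator G a"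
      using assms by (intro AE_pmfI) (auto simp: indicator_def)
  qed
  also have "\<dots> = c + (1 - c) * measure_pmf.prob A G"
    by (simp add: Bochner_Integration.integral_add[OF _ indicator_integrable])
  finally show ?thesis .
qed

lemma ED_le: "(insdel_step ^^ k) u v \<Longrightarrow> ED u v \<le> k"
  unfolding ED_def by (rule Least_le)

lemma insdel_step_Cons: "insdel_step u v \<Longrightarrow> insdel_step (c # u) (c # v)"
  unfolding insdel_step_def by (metis append_Cons)

lemma insdel_step_delete_hd: "insdel_step (c # u) u"
  unfolding insdel_step_def by (metis append.left_neutral append_Cons)

lemma insdel_step_snoc: "insdel_step u (u @ [c])"
  unfolding insdel_step_def by (metis append_Nil2)

lemma insdel_steps_Cons: "(insdel_step ^^ k) u v \<Longrightarrow> (insdel_step ^^ k) (c # u) (c # v)"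
proof (induction k arbitrary: v)
  case (Suc k)
  then obtain w where "(insdel_step ^^ k) u w" "insdel_step w v"
    by (auto elim: relpowp_Suc_E)
  with Suc.IH show ?case
    by (meson insdel_step_Cons relpowp_Suc_I)
qed simp

lemma insdel_steps_subseq: "subseq v u \<Longrightarrow> (insdel_step ^^ (length u - length v)) u v"
proof (induction rule: list_emb.induct)
  case (list_emb_Nil u)
  show ?case
  proof (induction u)
    case (Cons c u)
    then show ?case
      using relpowp_Suc_I2[of insdel_step, OF insdel_step_delete_hd Cons] by simp
  qed simp
next
  case (list_emb_Cons v u c)
  then have "length (c # u) - length v = Suc (length u - length v)"
    using list_emb_length by fastforce
  then show ?case
    using relpowp_Suc_I2[of insdel_step, OF insdel_step_delete_hd list_emb_Cons.IH] by simp
next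
  case list_emb_Cons2
  then show ?case
    by (simp add: insdel_steps_Cons)
qed

lemma insdel_steps_append: "(insdel_step ^^ length s) u (u @ s)"
proof (induction s rule: rev_induct)
  case (snoc c s)
  then show ?case
    using relpowp_Suc_I[OF snoc.IH insdel_step_snoc[of "u @ s" c]] by simp
qed simp

lemma ED_subseq_append_le:
  assumes "subseq v u"
  shows "ED u (v @ s) \<le> (length u - length v) + length s"
proof (rule ED_le)
  show "(insdel_step ^^ ((length u - length v) + length s)) u (v @ s)"
    unfolding relpowp_add using insdel_steps_subseq[OF assms] insdel_steps_append by blast
qed

lemma nths_eq_map_nth:
  assumes "N \<subseteq> {..<length xs}"
  shows "nths xs N = map ((!) xs) (sorted_list_of_set N)"
proof -
  have "finite N"
    using assms finite_subset by blast
  have "nths [0..<length xs] N = sorted_list_of_set N"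
    using assms \<open>finite N\<close>
    by (intro sorted_distinct_set_unique) (force simp: sorted_nths set_nths)+
  then show ?thesis
    by (metis map_nth nths_map)
qed

lemma subseq_map_nth_sorted_list_of_set:
  "N \<subseteq> {..<length xs} \<Longrightarrow> subseq (map ((!) xs) (sorted_list_of_set N)) xs"
  by (metis nths_eq_map_nth subseq_conv_nths)

lemma sorted_list_of_set_image_strict_mono_on:
  fixes f :: "'a::linorder \<Rightarrow> 'b::linorder"
  assumes "strict_mono_on S f" "A \<subseteq> S" "finite A"
  shows "sorted_list_of_set (f ` A) = map f (sorted_list_of_set A)"
proof -
  have "sorted_wrt (<) (map f (sorted_list_of_set A))"
    unfolding sorted_wrt_map
    by (rule sorted_wrt_mono_rel[OF _ strict_sorted_list_of_set])
       (use assms in \<open>auto simp: strict_mono_on_def\<close>)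
  moreover have "inj_on f A"
    using assms strict_mono_on_imp_inj_on inj_on_subset by blast
  ultimately show ?thesis
    using assms by (intro sorted_list_of_set_unique[THEN iffD1]) (auto simp: card_image)
qed

lemma restr_eq_map_nth:
  assumes "Q \<subseteq> {1..}" "finite Q"
  shows "restr xs Q = map ((!) xs) (sorted_list_of_set ((\<lambda>j. j - 1) ` Q))"
proof -
  have "strict_mono_on {1..} (\<lambda>j::nat. j - 1)"
    by (rule strict_mono_onI) auto
  then show ?thesis
    unfolding restr_def using assms by (simp add: sorted_list_of_set_image_strict_mono_on)
qed

lemma subseq_restr:
  assumes "Q \<subseteq> {1..length xs}"
  shows "subseq (restr xs Q) xs"
proof -
  have "Q \<subseteq> {1..}" "finite Q"
    using assms finite_subset by auto
  moreover have "(\<lambda>j. j - 1) ` Q \<subseteq> {..<length xs}"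
    using assms by fastforce
  ultimately show ?thesis
    by (simp add: restr_eq_map_nth subseq_map_nth_sorted_list_of_set)
qed

lemma restr_append_left:
  assumes "Q \<subseteq> {1..length xs}"
  shows "restr (xs @ ys) Q = restr xs Q"
proof -
  have "finite Q"
    using assms finite_subset by blast
  moreover have "\<forall>j \<in> Q. j - 1 < length xs"
    using assms by fastforce
  ultimately show ?thesis
    unfolding restr_def by (auto simp: nth_append)
qed

lemma take_eq_restr: "k \<le> length xs \<Longrightarrow> take k xs = restr xs {1..k}"
  unfolding restr_def atLeastLessThanSuc_atLeastAtMost[symmetric] sorted_list_of_set_range
  by (rule nth_equalityI) (auto simp del: upt_Suc)

locale deletion_pattern =
  fixes m :: nat and D :: "nat set"
  assumes D_subset: "D \<subseteq> {1..2*m}" and card_D: "card D \<le> m"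
begin

definition survivors :: "nat \<Rightarrow> nat" where
  "survivors k = card ({1..k} - D)"

lemma survivors_0 [simp]: "survivors 0 = 0"
  by (simp add: survivors_def)

lemma survivors_mono: "a \<le> b \<Longrightarrow> survivors a \<le> survivors b"
  unfolding survivors_def by (rule card_mono) auto

lemma survivors_Suc_le: "survivors (Suc k) \<le> Suc (survivors k)"
proof -
  have "{1..Suc k} - D \<subseteq> insert (Suc k) ({1..k} - D)"
    by auto
  then have "survivors (Suc k) \<le> card (insert (Suc k) ({1..k} - D))"
    unfolding survivors_def by (intro card_mono) auto
  then show ?thesis
    by (simp add: survivors_def card_insert_if)
qed

lemma survivors_le: "survivors k \<le> k"
  unfolding survivors_def using card_mono[of "{1..k}" "{1..k} - D"] by auto

lemma survivors_m: "survivors m = m - card (D \<inter> {1..m})"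
  unfolding survivors_def by (simp add: card_Diff_subset_Int Int_commute)

lemma m_le_survivors_2m: "m \<le> survivors (2*m)"
proof -
  have "finite D"
    using D_subset finite_subset by blast
  then have "survivors (2*m) = 2*m - card D"
    unfolding survivors_def using D_subset by (simp add: card_Diff_subset)
  then show ?thesis
    using card_D by simp
qed

lemma phi_eq_Least: "phi m D j = (LEAST k. k \<in> {1..2*m} \<and> j \<le> survivors k)"
  unfolding phi_def survivors_def ..

lemma phi_le: "j \<le> survivors k \<Longrightarrow> k \<in> {1..2*m} \<Longrightarrow> phi m D j \<le> k"
  unfolding phi_eq_Least by (rule Least_le) simp

lemma phi_in_range:
  assumes "1 \<le> j" "j \<le> m"
  shows "phi m D j \<in> {1..2*m}" "j \<le> survivors (phi m D j)"
  using LeastI[of "\<lambda>k. k \<in> {1..2*m} \<and> j \<le> survivors k" "2*m"] m_le_survivors_2m assms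
  unfolding phi_eq_Least by auto

lemma survivors_phi:
  assumes "1 \<le> j" "j \<le> m"
  shows "survivors (phi m D j) = j"
proof -
  let ?p = "phi m D j"
  have "survivors (?p - 1) < j"
  proof (rule ccontr)
    assume "\<not> survivors (?p - 1) < j"
    then have "?p - 1 \<in> {1..2*m}"
      using assms phi_in_range(1)[OF assms] by (cases "?p - 1") auto
    with \<open>\<not> survivors (?p - 1) < j\<close> have "?p \<le> ?p - 1"
      using phi_le by simp
    then show False
      using phi_in_range(1)[OF assms] by auto
  qed
  then have "survivors ?p \<le> j"
    using survivors_Suc_le[of "?p - 1"] phi_in_range(1)[OF assms] by simp
  with phi_in_range(2)[OF assms] show ?thesis
    by simp
qed

lemma strict_mono_on_phi: "strict_mono_on {1..m} (phi m D)"
proof (rule strict_mono_onI)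
  fix a b assume ab: "a \<in> {1..m}" "b \<in> {1..m}" "a < b"
  show "phi m D a < phi m D b"
  proof (rule ccontr)
    assume "\<not> phi m D a < phi m D b"
    then have "survivors (phi m D b) \<le> survivors (phi m D a)"
      by (intro survivors_mono) simp
    with ab show False
      by (simp add: survivors_phi)
  qed
qed

lemma shiftQ_subset: "Q \<subseteq> {1..m} \<Longrightarrow> shiftQ m D Q \<subseteq> {1..2*m}"
  unfolding shiftQ_def using phi_in_range(1) by auto

lemma card_shiftQ: "Q \<subseteq> {1..m} \<Longrightarrow> card (shiftQ m D Q) = card Q"
  unfolding shiftQ_def
  using inj_on_subset[OF strict_mono_on_imp_inj_on[OF strict_mono_on_phi]] by (simp add: card_image)

lemma shiftQ_survivors_subset: "shiftQ m D {1..survivors m} \<subseteq> {1..m}"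
proof -
  have "phi m D j \<in> {1..m}" if "1 \<le> j" "j \<le> survivors m" for j
    using that phi_in_range(1)[of j] phi_le[of j m] survivors_le[of m] by auto
  then show ?thesis
    unfolding shiftQ_def by auto
qed

definition surviving_prefix :: "bool list \<Rightarrow> bool list" where
  "surviving_prefix w = map (\<lambda>j. w ! (phi m D j - 1)) [1..<m+1]"

lemma length_surviving_prefix [simp]: "length (surviving_prefix w) = m"
  by (simp add: surviving_prefix_def)

lemma restr_surviving_prefix:
  assumes "Q \<subseteq> {1..m}"
  shows "restr (surviving_prefix w) Q = restr w (shiftQ m D Q)"
proof -
  have "finite Q"
    using assms finite_subset by blast
  then have "restr w (shiftQ m D Q) = map (\<lambda>j. w ! (phi m D j - 1)) (sorted_list_of_set Q)"
    unfolding restr_def shiftQ_def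
    using sorted_list_of_set_image_strict_mono_on[OF strict_mono_on_phi assms] by simp
  moreover have "surviving_prefix w ! (j - 1) = w ! (phi m D j - 1)" if "j \<in> Q" for j
  proof -
    have "1 \<le> j" "j \<le> m"
      using that assms by auto
    then have "[1..<m+1] ! (j - 1) = j"
      by (subst nth_upt) auto
    with \<open>1 \<le> j\<close> \<open>j \<le> m\<close> show ?thesis
      by (simp add: surviving_prefix_def del: upt_Suc)
  qed
  ultimately show ?thesis
    unfolding restr_def using \<open>finite Q\<close> by simp
qed

text \<open>Delete from c its symbols at positions in D, then append the missing |D \<inter> [m]| symbols.\<close>
lemma ED_surviving_prefix:
  assumes "length c = m"
  shows "ED c (surviving_prefix (c @ r)) \<le> 2 * card (D \<inter> {1..m})"
proof -
  let ?t = "survivors m"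
  let ?y = "surviving_prefix (c @ r)"
  have "take ?t ?y = restr ?y {1..?t}"
    using survivors_le by (simp add: take_eq_restr)
  also have "\<dots> = restr c (shiftQ m D {1..?t})"
    using shiftQ_survivors_subset survivors_le assms
    by (simp add: restr_surviving_prefix restr_append_left)
  finally have "subseq (take ?t ?y) c"
    using shiftQ_survivors_subset assms by (simp add: subseq_restr)
  then have "ED c (take ?t ?y @ drop ?t ?y) \<le> (m - ?t) + (m - ?t)"
    using ED_subseq_append_le[of "take ?t ?y" c "drop ?t ?y"] survivors_le assms by simp
  moreover have "m - ?t = card (D \<inter> {1..m})"
    using survivors_m card_mono[of "{1..m}" "D \<inter> {1..m}"] by simp
  ultimately show ?thesis
    by simp
qed

end

lemma nonadaptive_insdel_LDC_queries:
  "nonadaptive_insdel_LDC n m C q \<delta> \<epsilon> Dec \<Longrightarrow> i \<in> {1..n} \<Longrightarrow> (Q, f) \<in> set_pmf (Dec m' i) \<Longrightarrow>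
     Q \<subseteq> {1..m'}"
  unfolding nonadaptive_insdel_LDC_def by blast

lemma nonadaptive_insdel_LDC_length:
  "nonadaptive_insdel_LDC n m C q \<delta> \<epsilon> Dec \<Longrightarrow> x \<in> bitstrings n \<Longrightarrow> length (C x) = m"
  unfolding nonadaptive_insdel_LDC_def bitstrings_def by blast

lemma nonadaptive_insdel_LDC_decodes:
  "nonadaptive_insdel_LDC n m C q \<delta> \<epsilon> Dec \<Longrightarrow> x \<in> bitstrings n \<Longrightarrow> i \<in> {1..n} \<Longrightarrow>
     real (ED (C x) y) \<le> 2 * \<delta> * real m \<Longrightarrow>
     1/2 + \<epsilon> \<le> measure_pmf.prob (dec_out Dec y (length y) i) {x ! (i - 1)}"
  unfolding nonadaptive_insdel_LDC_def by blast

lemma decoder_success_on_shifted_queries: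
  assumes LDC: "nonadaptive_insdel_LDC n m C q \<delta> \<epsilon> Dec"
    and i: "i \<in> {1..n}" and x: "x \<in> bitstrings n"
    and D: "deletion_pattern m D" and few_deletions: "real (card (D \<inter> {1..m})) \<le> \<delta> * real m"
  shows "1/2 + \<epsilon> \<le> measure_pmf.prob (Dec m i)
           {(Q, f). f (restr (C x @ r) (shiftQ m D Q)) = x ! (i - 1)}"
proof -
  interpret deletion_pattern m D
    by (rule D)
  let ?y = "surviving_prefix (C x @ r)"
  have "length (C x) = m"
    using LDC x by (rule nonadaptive_insdel_LDC_length)
  then have "real (ED (C x) ?y) \<le> 2 * real (card (D \<inter> {1..m}))"
    using ED_surviving_prefix[of "C x" r] by linarith
  with few_deletions have "real (ED (C x) ?y) \<le> 2 * \<delta> * real m"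
    by linarith
  then have "1/2 + \<epsilon> \<le> measure_pmf.prob (dec_out Dec ?y m i) {x ! (i - 1)}"
    using nonadaptive_insdel_LDC_decodes[OF LDC x i, of ?y] by simp
  also have "\<dots> = measure_pmf.prob (Dec m i) {(Q, f). f (restr ?y Q) = x ! (i - 1)}"
    by (simp add: dec_out_def vimage_def case_prod_unfold)
  also have "\<dots> = measure_pmf.prob (Dec m i) {(Q, f). f (restr (C x @ r) (shiftQ m D Q)) = x ! (i - 1)}"
    using nonadaptive_insdel_LDC_queries[OF LDC i]
    by (intro measure_pmf.finite_measure_eq_AE AE_pmfI) (auto simp: restr_surviving_prefix)
  finally show ?thesis .
qed

lemma finite_bitstrings: "finite (bitstrings k)"
proof -
  have "bitstrings k = {xs. set xs \<subseteq> UNIV \<and> length xs = k}"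
    by (simp add: bitstrings_def)
  then show ?thesis
    using finite_lists_length_eq[of "UNIV :: bool set" k] by simp
qed

lemma bitstrings_ne_empty: "bitstrings k \<noteq> {}"
proof -
  have "replicate k False \<in> bitstrings k"
    by (simp add: bitstrings_def)
  then show ?thesis
    by blast
qed

abbreviation padded_input_pmf :: "nat \<Rightarrow> nat \<Rightarrow> (bool list \<times> bool list) pmf" where
  "padded_input_pmf n m \<equiv> pair_pmf (pmf_of_set (bitstrings n)) (pmf_of_set (bitstrings m))"

definition shifted_decoding ::
  "nat \<Rightarrow> (bool list \<Rightarrow> bool list) \<Rightarrow> nat \<Rightarrow>
     (((nat set \<times> (bool list \<Rightarrow> bool)) \<times> nat set) \<times> (bool list \<times> bool list)) set" where
  "shifted_decoding m C i =
     {(((Q, f), D), (x, r)). f (restr (C x @ r) (shiftQ m D Q)) = x ! (i - 1)}"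

lemma prob_shifted_decoding_ge:
  assumes LDC: "nonadaptive_insdel_LDC n m C q \<delta> \<epsilon> Dec" and i: "i \<in> {1..n}"
    and patterns: "\<And>D. D \<in> set_pmf \<D> \<Longrightarrow> deletion_pattern m D"
    and few_deletions: "\<And>D. D \<in> set_pmf \<D> \<Longrightarrow> real (card (D \<inter> {1..m})) \<le> \<delta> * real m"
  shows "1/2 + \<epsilon> \<le> measure_pmf.prob (pair_pmf (pair_pmf (Dec m i) \<D>) (padded_input_pmf n m))
           (shifted_decoding m C i)"
proof (intro prob_pair_pmf_ge_if_sections_ge)
  fix xr D
  assume "xr \<in> set_pmf (padded_input_pmf n m)" and D: "D \<in> set_pmf \<D>"
  then obtain x r where xr: "xr = (x, r)" and x: "x \<in> bitstrings n"
    by (auto simp: finite_bitstrings bitstrings_ne_empty)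
  have "{Qf. (Qf, D) \<in> {z. (z, xr) \<in> shifted_decoding m C i}} =
          {(Q, f). f (restr (C x @ r) (shiftQ m D Q)) = x ! (i - 1)}"
    by (auto simp: shifted_decoding_def xr)
  then show "1/2 + \<epsilon> \<le> measure_pmf.prob (Dec m i)
               {Qf. (Qf, D) \<in> {z. (z, xr) \<in> shifted_decoding m C i}}"
    using decoder_success_on_shifted_queries[OF LDC i x patterns[OF D] few_deletions[OF D]] by simp
qed

lemma prob_shifted_decoding_le:
  assumes LDC: "nonadaptive_insdel_LDC n m C q \<delta> \<epsilon> Dec" and i: "i \<in> {1..n}"
    and exact_q: "\<forall>(Q, f) \<in> set_pmf (Dec m i). card Q = q"
    and patterns: "\<And>D. D \<in> set_pmf \<D> \<Longrightarrow> deletion_pattern m D"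
  shows "measure_pmf.prob (pair_pmf (pair_pmf (Dec m i) \<D>) (padded_input_pmf n m))
           (shifted_decoding m C i) \<le>
         (1/2 + \<epsilon>/4) + (1 - (1/2 + \<epsilon>/4)) *
           measure_pmf.prob (pair_pmf (Dec m i) \<D>) {((Q, f), D). shiftQ m D Q \<in> Good n m C q \<epsilon> i}"
proof (rule prob_pair_pmf_le_if_sections_le)
  fix z
  assume z: "z \<in> set_pmf (pair_pmf (Dec m i) \<D>)"
    and not_Good: "z \<notin> {((Q, f), D). shiftQ m D Q \<in> Good n m C q \<epsilon> i}"
  obtain Q f D where z_eq: "z = ((Q, f), D)"
    by (metis prod.exhaust)
  have Qf: "(Q, f) \<in> set_pmf (Dec m i)" and D: "D \<in> set_pmf \<D>"
    using z by (simp_all add: z_eq)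
  interpret deletion_pattern m D
    using patterns[OF D] .
  have Q: "Q \<subseteq> {1..m}"
    using LDC i Qf by (rule nonadaptive_insdel_LDC_queries)
  have "shiftQ m D Q \<subseteq> {1..2*m}" "card (shiftQ m D Q) = q"
    using shiftQ_subset[OF Q] card_shiftQ[OF Q] exact_q Qf by auto
  with not_Good have "\<not> 1/2 + \<epsilon>/4 \<le> measure_pmf.prob (padded_input_pmf n m)
      {(x, r). f (restr (C x @ r) (shiftQ m D Q)) = x ! (i - 1)}"
    unfolding Good_def z_eq by blast
  moreover have "{xr. (z, xr) \<in> shifted_decoding m C i} =
      {(x, r). f (restr (C x @ r) (shiftQ m D Q)) = x ! (i - 1)}"
    by (auto simp: shifted_decoding_def z_eq)
  ultimately show "measure_pmf.prob (padded_input_pmf n m)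
      {xr. (z, xr) \<in> shifted_decoding m C i} \<le> 1/2 + \<epsilon>/4"
    by simp
next
  show "1/2 + \<epsilon>/4 \<le> 1"
    using LDC unfolding nonadaptive_insdel_LDC_def by simp
qed

theorem mainTheorem11:
  fixes n m q :: nat and \<delta> \<epsilon> :: real
    and C :: "bool list \<Rightarrow> bool list" and Dec :: decoder
    and \<D> :: "nat set pmf"
  assumes LDC: "nonadaptive_insdel_LDC n m C q \<delta> \<epsilon> Dec"
    and exact_q: "\<forall>i \<in> {1..n}. \<forall>(Q, f) \<in> set_pmf (Dec m i). card Q = q"
    and supp: "\<forall>D \<in> set_pmf \<D>. D \<subseteq> {1..2*m} \<and>
                 real (card (D \<inter> {1..m})) \<le> \<delta> * real m \<and> card D \<le> m"
    and i: "i \<in> {1..n}"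
  shows "measure_pmf.prob (pair_pmf (Dec m i) \<D>)
           {((Q, f), D). shiftQ m D Q \<in> Good n m C q \<epsilon> i} \<ge> 3 * \<epsilon> / 2"
proof -
  let ?g = "measure_pmf.prob (pair_pmf (Dec m i) \<D>)
    {((Q, f), D). shiftQ m D Q \<in> Good n m C q \<epsilon> i}"
  have patterns: "deletion_pattern m D" and few_deletions: "real (card (D \<inter> {1..m})) \<le> \<delta> * real m"
    if "D \<in> set_pmf \<D>" for D
    using supp that by (simp_all add: deletion_pattern_def)
  have "1/2 + \<epsilon> \<le> (1/2 + \<epsilon>/4) + (1 - (1/2 + \<epsilon>/4)) * ?g"
    using prob_shifted_decoding_ge[OF LDC i patterns few_deletions]
      prob_shifted_decoding_le[OF LDC i bspec[OF exact_q i] patterns]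
    by (rule order.trans)
  also have "\<dots> = 1/2 + \<epsilon>/4 + ?g/2 - \<epsilon> * ?g/4"
    by (simp add: algebra_simps)
  finally have "3 * \<epsilon> / 2 \<le> ?g - \<epsilon> * ?g / 2"
    by simp
  moreover have "0 \<le> \<epsilon> * ?g"
    using LDC unfolding nonadaptive_insdel_LDC_def by simp
  ultimately show ?thesis
    by simp
qed

end
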